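(* Let $G$ act 3-discontinuously and 2-cocompactly on a compactum $T$. Then $G$ is finitely generated if and only if there exists a nonempty $G$-invariant set $A$ of self-linked entourages of $T$ consisting of finitely many $G$-orbits such that the graph $\Gamma_A$ is connected.
   Context: A compactum is a compact Hausdorff space with at least 3 points; 3-discontinuous means the induced action on the space of 3-element subsets of $T$ is properly discontinuous, 2-cocompact means the induced action on the space of 2-element subsets is cocompact. Let $S^2T$ be the space of unordered pairs $\{x,y\}$ of points of $T$ (with $x=y$ allowed), a quotient of $T\times T$, and $\Delta^2T\subset S^2T$ the diagonal $\{\{x,x\}\}$. An entourage of $T$ is a neighborhood of $\Delta^2T$ in $S^2T$. For an entourage $\mathbf e$, a set $U\subset T$ is $\mathbf e$-small if $\{x,y\}\in\mathbf e$ for all $x,y\in U$. Two entourages $\mathbf a,\mathbf b$ are unlinked ($\mathbf a\bowtie\mathbf b$) if there exist an $\mathbf a$-small set $a$ and a $\mathbf b$-small set $b$ with $a\cup b=T$; otherwise they are linked ($\mathbf a\#\mathbf b$). An entourage $\mathbf a$ is self-linked if $\mathbf a\#\mathbf a$. $G$ acts on entourages via its action on $S^2T$. For a set $A$ of entourages, $\Gamma_A$ is the graph with vertex set $A$ in which distinct $\mathbf a,\mathbf b\in A$ are joined by an edge iff $\mathbf a\#\mathbf b$. *)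

theory Defs
  imports "HOL-Analysis.Analysis" "HOL-Algebra.Group_Action" "HOL-Algebra.Generated_Groups"
begin

text \<open>The space of n-element subsets of T (n = 2, 3), with the quotient topology
  induced from the space of ordered n-tuples of pairwise distinct points.\<close>

definition Theta2 :: "'a set set" where
  "Theta2 = {S. \<exists>x y. x \<noteq> y \<and> S = {x, y}}"

definition Theta3 :: "'a set set" where
  "Theta3 = {S. \<exists>x y z. distinct [x, y, z] \<and> S = {x, y, z}}"

definition theta2_top :: "('a::topological_space) set topology" where
  "theta2_top = topology (\<lambda>U. U \<subseteq> Theta2 \<and>
     openin (top_of_set {(x, y). x \<noteq> y}) {(x, y). x \<noteq> y \<and> {x, y} \<in> U})"

definition theta3_top :: "('a::topological_space) set topology" where
  "theta3_top = topology (\<lambda>U. U \<subseteq> Theta3 \<and>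
     openin (top_of_set {(x, y, z). distinct [x, y, z]})
            {(x, y, z). distinct [x, y, z] \<and> {x, y, z} \<in> U})"

definition set_act :: "('g \<Rightarrow> 'a \<Rightarrow> 'a) \<Rightarrow> 'g \<Rightarrow> 'a set \<Rightarrow> 'a set" where
  "set_act \<phi> g S = \<phi> g ` S"

definition action_by_homeos :: "('g, 'b) monoid_scheme \<Rightarrow> ('g \<Rightarrow> 'a::topological_space \<Rightarrow> 'a) \<Rightarrow> bool" where
  "action_by_homeos G \<phi> \<longleftrightarrow> group_action G UNIV \<phi> \<and>
     (\<forall>g\<in>carrier G. homeomorphism UNIV UNIV (\<phi> g) (\<phi> (inv\<^bsub>G\<^esub> g)))"

definition is_compactum :: "'a::topological_space itself \<Rightarrow> bool" where
  "is_compactum _ \<longleftrightarrow> compact (UNIV :: 'a set) \<and>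
     (\<forall>x y::'a. x \<noteq> y \<longrightarrow> (\<exists>U V. open U \<and> open V \<and> x \<in> U \<and> y \<in> V \<and> U \<inter> V = {})) \<and>
     (\<exists>x y z::'a. distinct [x, y, z])"

definition three_discontinuous :: "('g, 'b) monoid_scheme \<Rightarrow> ('g \<Rightarrow> 'a::topological_space \<Rightarrow> 'a) \<Rightarrow> bool" where
  "three_discontinuous G \<phi> \<longleftrightarrow>
     (\<forall>K. compactin theta3_top K \<longrightarrow>
        finite {g \<in> carrier G. set_act \<phi> g ` K \<inter> K \<noteq> {}})"

definition two_cocompact :: "('g, 'b) monoid_scheme \<Rightarrow> ('g \<Rightarrow> 'a::topological_space \<Rightarrow> 'a) \<Rightarrow> bool" where
  "two_cocompact G \<phi> \<longleftrightarrow>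
     (\<exists>K. compactin theta2_top K \<and> (\<Union>g\<in>carrier G. set_act \<phi> g ` K) = Theta2)"

definition finitely_generated :: "('g, 'b) monoid_scheme \<Rightarrow> bool" where
  "finitely_generated G \<longleftrightarrow> (\<exists>S. finite S \<and> S \<subseteq> carrier G \<and> generate G S = carrier G)"

text \<open>A subset of S^2 T (unordered pairs, diagonal allowed) is represented by the
  symmetric relation on T consisting of all ordered pairs (x,y) with {x,y} in it; this is a
  bijection preserving and reflecting openness (S^2 T carries the quotient topology of T x T).\<close>

definition entourage :: "('a::topological_space \<times> 'a) set \<Rightarrow> bool" where
  "entourage e \<longleftrightarrow> sym e \<and> (\<exists>U. open U \<and> Id \<subseteq> U \<and> U \<subseteq> e)"

definition small :: "('a \<times> 'a) set \<Rightarrow> 'a set \<Rightarrow> bool" where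
  "small e U \<longleftrightarrow> (\<forall>x\<in>U. \<forall>y\<in>U. (x, y) \<in> e)"

definition unlinked :: "('a \<times> 'a) set \<Rightarrow> ('a \<times> 'a) set \<Rightarrow> bool" where
  "unlinked e f \<longleftrightarrow> (\<exists>a b. small e a \<and> small f b \<and> a \<union> b = UNIV)"

definition linked :: "('a \<times> 'a) set \<Rightarrow> ('a \<times> 'a) set \<Rightarrow> bool" where
  "linked e f \<longleftrightarrow> \<not> unlinked e f"

definition self_linked :: "('a \<times> 'a) set \<Rightarrow> bool" where
  "self_linked e \<longleftrightarrow> linked e e"

definition ent_act :: "('g \<Rightarrow> 'a \<Rightarrow> 'a) \<Rightarrow> 'g \<Rightarrow> ('a \<times> 'a) set \<Rightarrow> ('a \<times> 'a) set" where
  "ent_act \<phi> g e = (\<lambda>(x, y). (\<phi> g x, \<phi> g y)) ` e"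

definition ent_orbit :: "('g, 'b) monoid_scheme \<Rightarrow> ('g \<Rightarrow> 'a \<Rightarrow> 'a) \<Rightarrow> ('a \<times> 'a) set \<Rightarrow> ('a \<times> 'a) set set" where
  "ent_orbit G \<phi> e = (\<lambda>g. ent_act \<phi> g e) ` carrier G"

definition Gamma_edges :: "('a \<times> 'a) set set \<Rightarrow> (('a \<times> 'a) set \<times> ('a \<times> 'a) set) set" where
  "Gamma_edges A = {(a, b). a \<in> A \<and> b \<in> A \<and> a \<noteq> b \<and> linked a b}"

definition Gamma_connected :: "('a \<times> 'a) set set \<Rightarrow> bool" where
  "Gamma_connected A \<longleftrightarrow> (\<forall>a\<in>A. \<forall>b\<in>A. (a, b) \<in> (Gamma_edges A)\<^sup>*)"

end

theory Submission
  imports Defs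
begin

(* "If": the only topological input is that each entourage a is linked with only finitely many
   translates g.b of an entourage b (finite_linking).  Pick orbit representatives R of A; the
   finitely many g with g.r linked to r' (r, r' in R) generate G, by walking along a path in
   Gamma_A from r to g.r (finitely_generated_of_connected).
   To prove finite_linking we take a nonprincipal ultrafilter U on an infinite set of such g and
   study the limit relation of the maps phi g along U.  By 3-discontinuity it contains no three
   pairs with distinct first and distinct second coordinates, hence (being total on both sides)
   it is covered by a row and a column {b} x T u T x {a}.  Then phi g eventually maps the
   complement of a small neighbourhood of b into a small neighbourhood of a, which makes g.e and
   e' unlinked for the two given entourages e, e' -- a contradiction.

   "Only if": for a finite generating set S and distinct points x, y, z, the complement u of the
   off-diagonal of a suitable finite set containing {x, y, z} and all s^-1.{x, y, z} is an
   entourage; its orbit A is self-linked, u is linked with each s.u, and Gamma_A is connected. *)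

section \<open>The topology on the space of 3-element subsets\<close>

lemma istopology_theta3:
  "istopology (\<lambda>U. U \<subseteq> Theta3 \<and>
     openin (top_of_set {(x, y, z). distinct [x, y, z]})
            {(x, y, z). distinct [x, y, z] \<and> {x, y, z} \<in> U})"
proof -
  have inter: "{(x, y, z). distinct [x, y, z] \<and> {x, y, z} \<in> S \<inter> T} =
      {(x, y, z). distinct [x, y, z] \<and> {x, y, z} \<in> S} \<inter> {(x, y, z). distinct [x, y, z] \<and> {x, y, z} \<in> T}"
    for S T :: "'a set set" by auto
  have union: "{(x, y, z). distinct [x, y, z] \<and> {x, y, z} \<in> \<Union>\<K>} =
      (\<Union>K\<in>\<K>. {(x, y, z). distinct [x, y, z] \<and> {x, y, z} \<in> K})"
    for \<K> :: "'a set set set" by auto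
  show ?thesis
    unfolding istopology_def inter union by auto
qed

lemma openin_theta3:
  "openin theta3_top U \<longleftrightarrow> U \<subseteq> Theta3 \<and>
     openin (top_of_set {(x, y, z). distinct [x, y, z]})
            {(x, y, z). distinct [x, y, z] \<and> {x, y, z} \<in> U}"
  unfolding theta3_top_def topology_inverse'[OF istopology_theta3] ..

lemma topspace_theta3: "topspace (theta3_top :: 'a::topological_space set topology) = Theta3"
proof -
  have "{(x, y, z). distinct [x, y, z] \<and> {x, y, z} \<in> (Theta3 :: 'a set set)} =
        {(x, y, z). distinct [x, y, z]}"
    unfolding Theta3_def by blast
  then have "openin theta3_top (Theta3 :: 'a set set)"
    unfolding openin_theta3 by simp
  then show ?thesis
    by (metis openin_subset openin_theta3 openin_topspace subset_antisym)
qed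

lemma continuous_map_triple_to_set:
  "continuous_map (top_of_set {(x, y, z). distinct [x, y, z]}) theta3_top
     (\<lambda>(x, y, z). {x, y, z} :: 'a::topological_space set)"
  unfolding continuous_map topspace_theta3
proof (intro conjI allI impI)
  show "(\<lambda>(x, y, z). {x, y, z}) ` topspace (top_of_set {(x, y, z). distinct [x, y, z]}) \<subseteq> (Theta3 :: 'a set set)"
    unfolding Theta3_def by auto
  fix U :: "'a set set" assume "openin theta3_top U"
  moreover have "{p \<in> topspace (top_of_set {(x, y, z). distinct [x, y, z]}). (case p of (x, y, z) \<Rightarrow> {x, y, z}) \<in> U}
      = {(x, y, z). distinct [x, y, z] \<and> {x, y, z} \<in> U}"
    by auto
  ultimately show "openin (top_of_set {(x, y, z). distinct [x, y, z]})
      {p \<in> topspace (top_of_set {(x, y, z). distinct [x, y, z]}). (case p of (x, y, z) \<Rightarrow> {x, y, z}) \<in> U}"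
    unfolding openin_theta3 by simp
qed

lemma compactin_triples:
  fixes A B C :: "'a::topological_space set"
  assumes "compact A" "compact B" "compact C" "A \<inter> B = {}" "A \<inter> C = {}" "B \<inter> C = {}"
  shows "compactin theta3_top ((\<lambda>(x, y, z). {x, y, z}) ` (A \<times> B \<times> C))"
proof (rule image_compactin[OF _ continuous_map_triple_to_set])
  have "A \<times> B \<times> C \<subseteq> {(x, y, z). distinct [x, y, z]}"
    using assms(4-6) by auto
  then show "compactin (top_of_set {(x, y, z). distinct [x, y, z]}) (A \<times> B \<times> C)"
    unfolding compactin_subtopology using assms(1-3) by (simp add: compact_Times)
qed

lemma compact_nbhd_within:
  fixes W :: "'a::topological_space set"
  assumes "compact (UNIV :: 'a set)" "Hausdorff_space (euclidean :: 'a topology)"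
    and "open W" "x \<in> W"
  obtains N C where "open N" "compact C" "x \<in> N" "N \<subseteq> C" "C \<subseteq> W"
proof -
  have "regular_space (euclidean :: 'a topology)"
    using assms(1,2) by (intro compact_Hausdorff_imp_regular_space) (simp_all add: compact_space_def)
  then have "neighbourhood_base_of (closedin euclidean) (euclidean :: 'a topology)"
    by (simp add: neighbourhood_base_of_closedin)
  then have "\<exists>N C. open N \<and> closed C \<and> x \<in> N \<and> N \<subseteq> C \<and> C \<subseteq> W"
    using assms(3,4) unfolding neighbourhood_base_of by simp
  then obtain N C where NC: "open N" "closed C" "x \<in> N" "N \<subseteq> C" "C \<subseteq> W"
    by blast
  have "compact C"
    using compact_Int_closed[OF assms(1) NC(2)] by simp
  with NC show thesis
    by (intro that) auto
qed

lemma triple_compact_nbhd: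
  fixes x1 x2 x3 :: "'a::topological_space"
  assumes cpt: "compact (UNIV :: 'a set)" and T2: "Hausdorff_space (euclidean :: 'a topology)"
    and "distinct [x1, x2, x3]"
  obtains N1 N2 N3 K where "open N1" "open N2" "open N3" "x1 \<in> N1" "x2 \<in> N2" "x3 \<in> N3"
    "compactin theta3_top K" "(\<lambda>(x, y, z). {x, y, z}) ` (N1 \<times> N2 \<times> N3) \<subseteq> K"
proof -
  have sep: "\<exists>U V. open U \<and> open V \<and> x \<in> U \<and> y \<in> V \<and> U \<inter> V = {}" if "x \<noteq> y" for x y :: 'a
    using T2 that unfolding Hausdorff_space_def disjnt_def by auto
  obtain U12 V12 where 12: "open U12" "open V12" "x1 \<in> U12" "x2 \<in> V12" "U12 \<inter> V12 = {}"
    using sep[of x1 x2] assms(3) by auto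
  obtain U13 V13 where 13: "open U13" "open V13" "x1 \<in> U13" "x3 \<in> V13" "U13 \<inter> V13 = {}"
    using sep[of x1 x3] assms(3) by auto
  obtain U23 V23 where 23: "open U23" "open V23" "x2 \<in> U23" "x3 \<in> V23" "U23 \<inter> V23 = {}"
    using sep[of x2 x3] assms(3) by auto
  define W1 W2 W3 where "W1 = U12 \<inter> U13" and "W2 = V12 \<inter> U23" and "W3 = V13 \<inter> V23"
  have W: "open W1" "open W2" "open W3" "x1 \<in> W1" "x2 \<in> W2" "x3 \<in> W3"
    "W1 \<inter> W2 = {}" "W1 \<inter> W3 = {}" "W2 \<inter> W3 = {}"
    unfolding W1_def W2_def W3_def using 12 13 23 by auto
  obtain N1 C1 where 1: "open N1" "compact C1" "x1 \<in> N1" "N1 \<subseteq> C1" "C1 \<subseteq> W1"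
    using compact_nbhd_within[OF cpt T2 W(1,4)] .
  obtain N2 C2 where 2: "open N2" "compact C2" "x2 \<in> N2" "N2 \<subseteq> C2" "C2 \<subseteq> W2"
    using compact_nbhd_within[OF cpt T2 W(2,5)] .
  obtain N3 C3 where 3: "open N3" "compact C3" "x3 \<in> N3" "N3 \<subseteq> C3" "C3 \<subseteq> W3"
    using compact_nbhd_within[OF cpt T2 W(3,6)] .
  have "C1 \<inter> C2 = {}" "C1 \<inter> C3 = {}" "C2 \<inter> C3 = {}"
    using 1(5) 2(5) 3(5) W(7-9) by blast+
  then have "compactin theta3_top ((\<lambda>(x, y, z). {x, y, z}) ` (C1 \<times> C2 \<times> C3))"
    using 1(2) 2(2) 3(2) by (rule compactin_triples[rotated 3])
  moreover have "(\<lambda>(x, y, z). {x, y, z}) ` (N1 \<times> N2 \<times> N3) \<subseteq> (\<lambda>(x, y, z). {x, y, z}) ` (C1 \<times> C2 \<times> C3)"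
    by (rule image_mono) (use 1(4) 2(4) 3(4) in auto)
  ultimately show thesis
    by (rule that[OF 1(1) 2(1) 3(1) 1(3) 2(3) 3(3)])
qed

section \<open>Entourages and linking\<close>

lemma entourage_small_nbhd:
  assumes "entourage e"
  obtains N where "open N" "x \<in> N" "small e N"
proof -
  obtain U where U: "open U" "Id \<subseteq> U" "U \<subseteq> e"
    using assms unfolding entourage_def by blast
  have "(x, x) \<in> U"
    using U(2) by auto
  then obtain A B where AB: "open A" "open B" "(x, x) \<in> A \<times> B" "A \<times> B \<subseteq> U"
    by (rule open_prod_elim[OF U(1)])
  have "small e (A \<inter> B)"
    unfolding small_def using AB(4) U(3) by blast
  with AB show thesis
    by (intro that[of "A \<inter> B"]) auto
qed

definition off_diag :: "'a set \<Rightarrow> ('a \<times> 'a) set" where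
  "off_diag X = {(p, q). p \<in> X \<and> q \<in> X \<and> p \<noteq> q}"

(* For finite X the complement of off_diag X is an entourage: finite sets of pairs are closed in
   the Hausdorff space T x T. *)
lemma entourage_Compl_off_diag:
  fixes X :: "'a::topological_space set"
  assumes "Hausdorff_space (euclidean :: 'a topology)" "finite X"
  shows "entourage (- off_diag X)"
proof -
  have "Hausdorff_space (prod_topology (euclidean :: 'a topology) (euclidean :: 'a topology))"
    unfolding Hausdorff_space_prod_topology using assms(1) by blast
  then have "t1_space (euclidean :: ('a \<times> 'a) topology)"
    using Hausdorff_imp_t1_space by simp
  moreover have "finite (off_diag X)"
    using assms(2) finite_subset[of "off_diag X" "X \<times> X"] unfolding off_diag_def by auto
  ultimately have "open (- off_diag X)"
    unfolding t1_space_closedin_finite by (simp add: open_Compl)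
  moreover have "sym (- off_diag X)" "Id \<subseteq> - off_diag X"
    unfolding off_diag_def sym_def by auto
  ultimately show ?thesis
    unfolding entourage_def by blast
qed

lemma small_Compl_off_diag:
  "small (- off_diag X) c \<Longrightarrow> p \<in> c \<Longrightarrow> q \<in> c \<Longrightarrow> p \<in> X \<Longrightarrow> q \<in> X \<Longrightarrow> p = q"
  unfolding small_def off_diag_def by blast

lemma linked_Compl_off_diag:
  assumes "distinct [x, y, z]" "{x, y, z} \<subseteq> X" "{x, y, z} \<subseteq> Y"
  shows "linked (- off_diag X) (- off_diag Y)"
  unfolding linked_def unlinked_def
proof
  assume "\<exists>a b. small (- off_diag X) a \<and> small (- off_diag Y) b \<and> a \<union> b = UNIV"
  then obtain a b where ab: "small (- off_diag X) a" "small (- off_diag Y) b" "a \<union> b = UNIV"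
    by blast
  have "\<not> (x \<in> a \<and> y \<in> a)" "\<not> (x \<in> a \<and> z \<in> a)" "\<not> (y \<in> a \<and> z \<in> a)"
    using small_Compl_off_diag[OF ab(1)] assms(1,2) by auto
  moreover have "\<not> (x \<in> b \<and> y \<in> b)" "\<not> (x \<in> b \<and> z \<in> b)" "\<not> (y \<in> b \<and> z \<in> b)"
    using small_Compl_off_diag[OF ab(2)] assms(1,3) by auto
  moreover have "x \<in> a \<or> x \<in> b" "y \<in> a \<or> y \<in> b" "z \<in> a \<or> z \<in> b"
    using ab(3) by auto
  ultimately show False
    by blast
qed

lemma small_ent_act: "small e N \<Longrightarrow> small (ent_act f g e) (f g ` N)"
  unfolding small_def ent_act_def by force

lemma linked_sym: "linked e f \<Longrightarrow> linked f e"
  unfolding linked_def unlinked_def by (metis sup_commute)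

lemma Gamma_edges_sym: "sym (Gamma_edges A)"
  unfolding sym_def Gamma_edges_def using linked_sym by blast

definition ultrafilter :: "'a filter \<Rightarrow> bool" where
  "ultrafilter U \<longleftrightarrow> U \<noteq> bot \<and> (\<forall>P. eventually P U \<or> eventually (\<lambda>x. \<not> P x) U)"

(* Every proper filter is refined by an ultrafilter: by Zorn's lemma there is a minimal proper
   filter below F, and minimality forces it to decide every predicate. *)
lemma ultrafilter_below:
  fixes F :: "'a filter"
  assumes "F \<noteq> bot"
  obtains U where "U \<le> F" "ultrafilter U"
proof -
  define \<A> where "\<A> = {U. U \<le> F \<and> U \<noteq> bot}"
  have po: "partial_order_on \<A> (relation_of (\<lambda>U V. V \<le> U) \<A>)"
    by (rule partial_order_on_relation_ofI) auto
  have "\<exists>u\<in>\<A>. \<forall>U\<in>C. u \<le> U" if C: "C \<in> Chains (relation_of (\<lambda>U V. V \<le> U) \<A>)" for C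
  proof (cases "C = {}")
    case True
    then show ?thesis
      using assms unfolding \<A>_def by auto
  next
    case False
    have CA: "C \<subseteq> \<A>"
      using C unfolding Chains_def relation_of_def by auto
    have base: "\<exists>W\<in>C. W \<le> inf U V" if "U \<in> C" "V \<in> C" for U V
      using C that unfolding Chains_def relation_of_def by (auto intro: inf.absorb1 inf.absorb2)
    have "Inf C \<noteq> bot"
    proof
      assume "Inf C = bot"
      then obtain U where "U \<in> C" "eventually (\<lambda>_. False) U"
        using eventually_Inf_base[OF False base, of "\<lambda>_. False"] by auto
      then show False
        using CA unfolding \<A>_def by (auto simp: trivial_limit_def)
    qed
    moreover have "Inf C \<le> F"
      using False CA unfolding \<A>_def by (auto intro: Inf_lower2)
    ultimately show ?thesis
      unfolding \<A>_def by (auto intro: Inf_lower)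
  qed
  then obtain U where U: "U \<in> \<A>" and minimal: "\<And>V. V \<in> \<A> \<Longrightarrow> V \<le> U \<Longrightarrow> V = U"
    using predicate_Zorn[OF po] by blast
  have "eventually P U \<or> eventually (\<lambda>x. \<not> P x) U" for P
  proof (rule disjCI)
    assume "\<not> eventually (\<lambda>x. \<not> P x) U"
    then have "inf U (principal {x. P x}) \<noteq> bot"
      by (simp add: trivial_limit_def eventually_inf_principal)
    then have "inf U (principal {x. P x}) = U"
      using U by (intro minimal) (auto simp: \<A>_def intro: le_infI1)
    moreover have "eventually P (inf U (principal {x. P x}))"
      by (simp add: eventually_inf_principal)
    ultimately show "eventually P U"
      by simp
  qed
  then have "ultrafilter U"
    using U unfolding \<A>_def ultrafilter_def by blast
  with U show thesis
    unfolding \<A>_def by (intro that) auto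
qed

definition three_matching :: "('a \<times> 'b) set \<Rightarrow> bool" where
  "three_matching R \<longleftrightarrow> (\<exists>x1 x2 x3 y1 y2 y3. distinct [x1, x2, x3] \<and> distinct [y1, y2, y3]
     \<and> (x1, y1) \<in> R \<and> (x2, y2) \<in> R \<and> (x3, y3) \<in> R)"

lemma three_matchingI:
  "distinct [x1, x2, x3] \<Longrightarrow> distinct [y1, y2, y3] \<Longrightarrow>
   (x1, y1) \<in> R \<Longrightarrow> (x2, y2) \<in> R \<Longrightarrow> (x3, y3) \<in> R \<Longrightarrow> three_matching R"
  unfolding three_matching_def by blast

lemma avoid_two:
  assumes "\<exists>a b c :: 'a. distinct [a, b, c]"
  shows "\<exists>z. z \<noteq> x \<and> z \<noteq> (y :: 'a)"
  using assms by (metis distinct_length_2_or_more distinct_singleton)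

lemma cover_of_crossing:
  assumes no3: "\<not> three_matching R"
    and "distinct [x1, x2, x3]" "distinct [y1, y2, y3]"
    and "(x1, y1) \<in> R" "(x2, y2) \<in> R" "(x3, y1) \<in> R" "(x2, y3) \<in> R"
    and xy: "(x, y) \<in> R"
  shows "x = x2 \<or> y = y1"
proof (rule ccontr)
  assume "\<not> (x = x2 \<or> y = y1)"
  then have "x \<noteq> x2" "y \<noteq> y1" by auto
  then consider "x = x1" "y = y3" | "x = x1" "y \<noteq> y3" | "x = x3" "y = y2" | "x = x3" "y \<noteq> y2"
    | "x \<notin> {x1, x3}" "y = y2" | "x \<notin> {x1, x3}" "y \<noteq> y2"
    by blast
  then show False
  proof cases
    case 1
    then show ?thesis
      using three_matchingI[of x1 x2 x3 y3 y2 y1 R] assms by auto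
  next
    case 2
    then show ?thesis
      using three_matchingI[of x1 x2 x3 y y3 y1 R] assms \<open>y \<noteq> y1\<close> by auto
  next
    case 3
    then show ?thesis
      using three_matchingI[of x1 x2 x3 y1 y3 y2 R] assms by auto
  next
    case 4
    then show ?thesis
      using three_matchingI[of x1 x2 x3 y1 y2 y R] assms \<open>y \<noteq> y1\<close> by auto
  next
    case 5
    then show ?thesis
      using three_matchingI[of x x2 x3 y2 y3 y1 R] assms \<open>x \<noteq> x2\<close> by auto
  next
    case 6
    then show ?thesis
      using three_matchingI[of x x1 x2 y y1 y2 R] assms \<open>x \<noteq> x2\<close> \<open>y \<noteq> y1\<close> by auto
  qed
qed

lemma cover_by_row_and_column:
  fixes R :: "('a \<times> 'b) set"
  assumes left_total: "\<And>x. \<exists>y. (x, y) \<in> R" and right_total: "\<And>y. \<exists>x. (x, y) \<in> R"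
    and three_x: "\<exists>a b c :: 'a. distinct [a, b, c]" and three_y: "\<exists>a b c :: 'b. distinct [a, b, c]"
    and no3: "\<not> three_matching R"
  obtains b a where "R \<subseteq> {b} \<times> UNIV \<union> UNIV \<times> {a}"
proof (cases "\<exists>x1 y1 x2 y2. (x1, y1) \<in> R \<and> (x2, y2) \<in> R \<and> x1 \<noteq> x2 \<and> y1 \<noteq> y2")
  case False
  obtain x0 y0 where "(x0, y0) \<in> R"
    using left_total by blast
  with False show thesis
    by (intro that[of x0 y0]) auto
next
  case True
  then obtain x1 y1 x2 y2 where m: "(x1, y1) \<in> R" "(x2, y2) \<in> R" "x1 \<noteq> x2" "y1 \<noteq> y2"
    by blast
  obtain x3 w where x3: "x3 \<noteq> x1" "x3 \<noteq> x2" "(x3, w) \<in> R"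
    using avoid_two[OF three_x, of x1 x2] left_total by blast
  obtain y3 z where y3: "y3 \<noteq> y1" "y3 \<noteq> y2" "(z, y3) \<in> R"
    using avoid_two[OF three_y, of y1 y2] right_total by blast
  have w: "w = y1 \<or> w = y2"
    using three_matchingI[of x1 x2 x3 y1 y2 w R] no3 m x3 by auto
  have z: "z = x1 \<or> z = x2"
    using three_matchingI[of x1 x2 z y1 y2 y3 R] no3 m y3 by auto
  show thesis
  proof (cases "w = y1")
    case True
    then have "z = x2"
      using three_matchingI[of x1 x2 x3 y3 y2 y1 R] no3 m x3 y3 z by auto
    then show thesis
      using cover_of_crossing[OF no3, of x1 x2 x3 y1 y2 y3] m x3 y3 True
      by (intro that[of x2 y1]) auto
  next
    case False
    then have "w = y2" "z = x1"
      using three_matchingI[of x2 x1 x3 y3 y1 y2 R] no3 m x3 y3 w z by auto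
    then show thesis
      using cover_of_crossing[OF no3, of x2 x1 x3 y2 y1 y3] m x3 y3
      by (intro that[of x1 y2]) auto
  qed
qed

section \<open>The limit relation of a family of maps along a filter\<close>

definition limit_rel :: "'g filter \<Rightarrow> ('g \<Rightarrow> 'a::topological_space \<Rightarrow> 'a) \<Rightarrow> ('a \<times> 'a) set" where
  "limit_rel F f = {(x, y). \<forall>P Q. open P \<longrightarrow> open Q \<longrightarrow> x \<in> P \<longrightarrow> y \<in> Q \<longrightarrow>
     \<not> eventually (\<lambda>g. f g ` P \<inter> Q = {}) F}"

lemma not_in_limit_rel:
  assumes "(x, y) \<notin> limit_rel F f"
  obtains P Q where "open P" "open Q" "x \<in> P" "y \<in> Q" "eventually (\<lambda>g. f g ` P \<inter> Q = {}) F"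
  using assms unfolding limit_rel_def by blast

lemma limit_rel_meets:
  assumes "ultrafilter F"
    and "(x, y) \<in> limit_rel F f" "open P" "open Q" "x \<in> P" "y \<in> Q"
  shows "eventually (\<lambda>g. f g ` P \<inter> Q \<noteq> {}) F"
  using assms unfolding limit_rel_def ultrafilter_def by blast

lemma eventually_apart_compact:
  fixes f :: "'g \<Rightarrow> 'a::topological_space \<Rightarrow> 'a"
  assumes "compact C" "compact D" and disj: "(C \<times> D) \<inter> limit_rel F f = {}"
  shows "eventually (\<lambda>g. f g ` C \<inter> D = {}) F"
proof -
  have "\<exists>P Q. open P \<and> open Q \<and> p \<in> P \<times> Q \<and> eventually (\<lambda>g. f g ` P \<inter> Q = {}) F"
    if "p \<in> C \<times> D" for p
  proof -
    have "p \<notin> limit_rel F f"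
      using disj that by blast
    then show ?thesis
      by (metis mem_Times_iff not_in_limit_rel prod.collapse)
  qed
  then obtain P Q where PQ: "\<And>p. p \<in> C \<times> D \<Longrightarrow> open (P p) \<and> open (Q p) \<and> p \<in> P p \<times> Q p
      \<and> eventually (\<lambda>g. f g ` P p \<inter> Q p = {}) F"
    by metis
  have cpt: "compact (C \<times> D)"
    using assms(1,2) by (rule compact_Times)
  have cover: "C \<times> D \<subseteq> (\<Union>p\<in>C \<times> D. P p \<times> Q p)"
    using PQ by blast
  obtain I where I: "I \<subseteq> C \<times> D" "finite I" "C \<times> D \<subseteq> (\<Union>p\<in>I. P p \<times> Q p)"
    by (rule compactE_image[OF cpt _ cover]) (use PQ in \<open>auto intro: open_Times\<close>)
  have "eventually (\<lambda>g. \<forall>p\<in>I. f g ` P p \<inter> Q p = {}) F"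
    using I(1,2) PQ by (intro eventually_ball_finite) auto
  then show ?thesis
  proof (rule eventually_mono)
    fix g assume apart: "\<forall>p\<in>I. f g ` P p \<inter> Q p = {}"
    show "f g ` C \<inter> D = {}"
    proof (rule ccontr)
      assume "f g ` C \<inter> D \<noteq> {}"
      then obtain c where "c \<in> C" "f g c \<in> D"
        by blast
      then obtain p where "p \<in> I" "(c, f g c) \<in> P p \<times> Q p"
        using I(3) by blast
      then show False
        using apart by blast
    qed
  qed
qed

lemma limit_rel_left_total:
  fixes f :: "'g \<Rightarrow> 'a::topological_space \<Rightarrow> 'a"
  assumes "compact (UNIV :: 'a set)" "F \<noteq> bot"
  shows "\<exists>y. (x, y) \<in> limit_rel F f"
proof (rule ccontr)
  assume "\<nexists>y. (x, y) \<in> limit_rel F f"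
  then have "eventually (\<lambda>g. f g ` {x} \<inter> UNIV = {}) F"
    using assms(1) by (intro eventually_apart_compact) auto
  then show False
    using assms(2) by (simp add: trivial_limit_def)
qed

lemma limit_rel_right_total:
  fixes f :: "'g \<Rightarrow> 'a::topological_space \<Rightarrow> 'a"
  assumes "compact (UNIV :: 'a set)" "F \<noteq> bot" "eventually (\<lambda>g. surj (f g)) F"
  shows "\<exists>x. (x, y) \<in> limit_rel F f"
proof (rule ccontr)
  assume "\<nexists>x. (x, y) \<in> limit_rel F f"
  then have "eventually (\<lambda>g. f g ` UNIV \<inter> {y} = {}) F"
    using assms(1) by (intro eventually_apart_compact) auto
  with assms(3) have "eventually (\<lambda>g. False) F"
    by eventually_elim auto
  then show False
    using assms(2) by (simp add: trivial_limit_def)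
qed

(* Everything about the action used below: a group acting on a compact Hausdorff space with at
   least three points. *)
locale compactum_action = group G + group_action G "UNIV :: 'a set" \<phi>
  for G :: "('g, 'b) monoid_scheme" (structure) and \<phi> :: "'g \<Rightarrow> 'a::topological_space \<Rightarrow> 'a" +
  assumes compact_space: "compact (UNIV :: 'a set)"
    and Hausdorff: "Hausdorff_space (euclidean :: 'a topology)"
    and three_points: "\<exists>x y z :: 'a. distinct [x, y, z]"
begin

lemma phi_one: "\<phi> \<one> x = x"
  using id_eq_one by (metis UNIV_I restrict_apply')

lemma phi_mult: "g \<in> carrier G \<Longrightarrow> h \<in> carrier G \<Longrightarrow> \<phi> (g \<otimes> h) x = \<phi> g (\<phi> h x)"
  by (rule composition_rule) auto

lemma phi_inv_cancel: "g \<in> carrier G \<Longrightarrow> \<phi> (inv g) (\<phi> g x) = x"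
  by (simp add: phi_mult[symmetric] phi_one)

lemma phi_cancel_inv: "g \<in> carrier G \<Longrightarrow> \<phi> g (\<phi> (inv g) x) = x"
  by (simp add: phi_mult[symmetric] phi_one)

lemma phi_surj: "g \<in> carrier G \<Longrightarrow> surj (\<phi> g)"
  using surj_prop by blast

lemma ent_act_mem: "g \<in> carrier G \<Longrightarrow> (\<phi> g x, \<phi> g y) \<in> ent_act \<phi> g e \<longleftrightarrow> (x, y) \<in> e"
  unfolding ent_act_def by (force dest: arg_cong[where f = "\<phi> (inv g)"] simp: phi_inv_cancel)

lemma mem_ent_act: "g \<in> carrier G \<Longrightarrow> (p, q) \<in> ent_act \<phi> g e \<longleftrightarrow> (\<phi> (inv g) p, \<phi> (inv g) q) \<in> e"
  by (metis ent_act_mem phi_cancel_inv)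

lemma ent_act_mult: "g \<in> carrier G \<Longrightarrow> h \<in> carrier G \<Longrightarrow>
    ent_act \<phi> g (ent_act \<phi> h e) = ent_act \<phi> (g \<otimes> h) e"
  unfolding ent_act_def image_image by (rule image_cong) (auto simp: phi_mult)

lemma ent_act_one: "ent_act \<phi> \<one> e = e"
  unfolding ent_act_def by (simp add: phi_one case_prod_beta)

lemma ent_act_inv_cancel: "g \<in> carrier G \<Longrightarrow> ent_act \<phi> (inv g) (ent_act \<phi> g e) = e"
  by (simp add: ent_act_mult ent_act_one)

lemma ent_act_Compl_off_diag:
  assumes "g \<in> carrier G"
  shows "ent_act \<phi> g (- off_diag X) = - off_diag (\<phi> g ` X)"
proof -
  have "\<phi> (inv g) p \<in> X \<longleftrightarrow> p \<in> \<phi> g ` X" for p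
    using assms by (metis image_iff phi_cancel_inv phi_inv_cancel)
  moreover have "\<phi> (inv g) p = \<phi> (inv g) q \<longleftrightarrow> p = q" for p q
    using assms by (metis phi_cancel_inv)
  ultimately show ?thesis
    using assms by (auto simp: mem_ent_act off_diag_def)
qed

lemma unlinked_ent_act:
  assumes "g \<in> carrier G" "unlinked e f"
  shows "unlinked (ent_act \<phi> g e) (ent_act \<phi> g f)"
proof -
  obtain a b where "small e a" "small f b" "a \<union> b = UNIV"
    using assms(2) unfolding unlinked_def by blast
  moreover have "\<phi> g ` a \<union> \<phi> g ` b = UNIV"
    using phi_surj[OF assms(1)] \<open>a \<union> b = UNIV\<close> by (metis image_Un)
  ultimately show ?thesis
    unfolding unlinked_def by (blast intro: small_ent_act)
qed

lemma linked_ent_act_iff: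
  assumes "g \<in> carrier G"
  shows "linked (ent_act \<phi> g e) (ent_act \<phi> g f) \<longleftrightarrow> linked e f"
proof
  assume "linked (ent_act \<phi> g e) (ent_act \<phi> g f)"
  then show "linked e f"
    using unlinked_ent_act[OF assms] unfolding linked_def by blast
next
  assume "linked e f"
  show "linked (ent_act \<phi> g e) (ent_act \<phi> g f)"
    unfolding linked_def
  proof
    assume "unlinked (ent_act \<phi> g e) (ent_act \<phi> g f)"
    from unlinked_ent_act[OF inv_closed[OF assms] this] have "unlinked e f"
      by (simp add: ent_act_inv_cancel assms)
    with \<open>linked e f\<close> show False
      unfolding linked_def by simp
  qed
qed

lemma ent_orbit_self: "u \<in> ent_orbit G \<phi> u"
  unfolding ent_orbit_def using ent_act_one by (metis image_eqI one_closed)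

lemma ent_orbit_closed:
  "g \<in> carrier G \<Longrightarrow> e \<in> ent_orbit G \<phi> u \<Longrightarrow> ent_act \<phi> g e \<in> ent_orbit G \<phi> u"
  unfolding ent_orbit_def by (auto simp: ent_act_mult)

lemma ent_orbit_eq:
  assumes "e \<in> ent_orbit G \<phi> u"
  shows "ent_orbit G \<phi> e = ent_orbit G \<phi> u"
proof
  show "ent_orbit G \<phi> e \<subseteq> ent_orbit G \<phi> u"
    using assms ent_orbit_closed unfolding ent_orbit_def[of _ _ e] by blast
  obtain h where h: "h \<in> carrier G" "e = ent_act \<phi> h u"
    using assms unfolding ent_orbit_def by blast
  then have "u = ent_act \<phi> (inv h) e"
    by (simp add: ent_act_inv_cancel)
  then have "u \<in> ent_orbit G \<phi> e"
    using h(1) unfolding ent_orbit_def by blast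
  then show "ent_orbit G \<phi> u \<subseteq> ent_orbit G \<phi> e"
    using ent_orbit_closed unfolding ent_orbit_def[of _ _ u] by blast
qed

lemma Gamma_edges_act:
  assumes inv: "\<And>g e. g \<in> carrier G \<Longrightarrow> e \<in> A \<Longrightarrow> ent_act \<phi> g e \<in> A"
    and "g \<in> carrier G" "(a, b) \<in> (Gamma_edges A)\<^sup>*"
  shows "(ent_act \<phi> g a, ent_act \<phi> g b) \<in> (Gamma_edges A)\<^sup>*"
  using assms(3)
proof (induction rule: rtrancl_induct)
  case (step b c)
  then have "(ent_act \<phi> g b, ent_act \<phi> g c) \<in> Gamma_edges A"
    unfolding Gamma_edges_def using inv[OF assms(2)] linked_ent_act_iff[OF assms(2)]
    by (auto dest: arg_cong[where f = "ent_act \<phi> (inv g)"] simp: ent_act_inv_cancel assms(2))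
  with step.IH show ?case
    by (rule rtrancl_into_rtrancl)
qed simp

subsection \<open>Finiteness of linking\<close>

(* 3-discontinuity: along a nonprincipal ultrafilter, the limit relation contains no three
   independent pairs, for otherwise some triple in a fixed compact set of Theta3 would be mapped
   into another fixed compact set by infinitely many group elements. *)
lemma limit_rel_no_three_matching:
  assumes d3: "three_discontinuous G \<phi>" and ultra: "ultrafilter U" and cofinite: "U \<le> cofinite"
    and carrier: "eventually (\<lambda>g. g \<in> carrier G) U"
  shows "\<not> three_matching (limit_rel U \<phi>)"
proof
  assume "three_matching (limit_rel U \<phi>)"
  then obtain x1 x2 x3 y1 y2 y3 where x: "distinct [x1, x2, x3]" and y: "distinct [y1, y2, y3]"
    and lim: "(x1, y1) \<in> limit_rel U \<phi>" "(x2, y2) \<in> limit_rel U \<phi>" "(x3, y3) \<in> limit_rel U \<phi>"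
    unfolding three_matching_def by blast
  obtain N1 N2 N3 K where N: "open N1" "open N2" "open N3" "x1 \<in> N1" "x2 \<in> N2" "x3 \<in> N3"
    and K: "compactin theta3_top K" "(\<lambda>(x, y, z). {x, y, z}) ` (N1 \<times> N2 \<times> N3) \<subseteq> K"
    using triple_compact_nbhd[OF compact_space Hausdorff x] .
  obtain M1 M2 M3 K' where M: "open M1" "open M2" "open M3" "y1 \<in> M1" "y2 \<in> M2" "y3 \<in> M3"
    and K': "compactin theta3_top K'" "(\<lambda>(x, y, z). {x, y, z}) ` (M1 \<times> M2 \<times> M3) \<subseteq> K'"
    using triple_compact_nbhd[OF compact_space Hausdorff y] .
  have "compactin theta3_top (K \<union> K')"
    using K(1) K'(1) by (rule compactin_Un)
  then have "finite {g \<in> carrier G. set_act \<phi> g ` (K \<union> K') \<inter> (K \<union> K') \<noteq> {}}"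
    using d3 unfolding three_discontinuous_def by blast
  then have "eventually (\<lambda>g. g \<notin> {g \<in> carrier G. set_act \<phi> g ` (K \<union> K') \<inter> (K \<union> K') \<noteq> {}}) U"
    by (intro filter_leD[OF cofinite]) (simp add: eventually_cofinite)
  moreover have "eventually (\<lambda>g. \<phi> g ` N1 \<inter> M1 \<noteq> {}) U"
    using limit_rel_meets[OF ultra lim(1) N(1) M(1) N(4) M(4)] .
  moreover have "eventually (\<lambda>g. \<phi> g ` N2 \<inter> M2 \<noteq> {}) U"
    using limit_rel_meets[OF ultra lim(2) N(2) M(2) N(5) M(5)] .
  moreover have "eventually (\<lambda>g. \<phi> g ` N3 \<inter> M3 \<noteq> {}) U"
    using limit_rel_meets[OF ultra lim(3) N(3) M(3) N(6) M(6)] .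
  ultimately have "eventually (\<lambda>g. False) U"
    using carrier
  proof eventually_elim
    case (elim g)
    then obtain a1 a2 a3 where a: "a1 \<in> N1" "a2 \<in> N2" "a3 \<in> N3"
      and b: "\<phi> g a1 \<in> M1" "\<phi> g a2 \<in> M2" "\<phi> g a3 \<in> M3"
      by blast
    have "{a1, a2, a3} \<in> K"
      using K(2) a by (force intro: rev_image_eqI[of "(a1, a2, a3)"])
    moreover have "set_act \<phi> g {a1, a2, a3} \<in> K'"
      using K'(2) b unfolding set_act_def
      by (force intro: rev_image_eqI[of "(\<phi> g a1, \<phi> g a2, \<phi> g a3)"])
    ultimately show False
      using elim by blast
  qed
  with ultra show False
    by (simp add: ultrafilter_def trivial_limit_def)
qed

(* If the limit relation is covered by row b and column a, then eventually a small
   neighbourhood of a together with the image of a small neighbourhood of b covers T. *)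
lemma eventually_unlinked:
  assumes "entourage e" "entourage e'"
    and cover: "limit_rel U \<phi> \<subseteq> {b} \<times> UNIV \<union> UNIV \<times> {a}"
    and carrier: "eventually (\<lambda>g. g \<in> carrier G) U"
  shows "eventually (\<lambda>g. unlinked (ent_act \<phi> g e) e') U"
proof -
  obtain N where N: "open N" "b \<in> N" "small e N"
    using entourage_small_nbhd[OF assms(1)] .
  obtain N' where N': "open N'" "a \<in> N'" "small e' N'"
    using entourage_small_nbhd[OF assms(2)] .
  have "compact (- N)" "compact (- N')"
    using compact_Int_closed[OF compact_space, of "- N"] compact_Int_closed[OF compact_space, of "- N'"]
      N(1) N'(1) by (simp_all add: closed_Compl)
  moreover have "((- N) \<times> (- N')) \<inter> ({b} \<times> UNIV \<union> UNIV \<times> {a}) = {}"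
    using N(2) N'(2) by auto
  with cover have "((- N) \<times> (- N')) \<inter> limit_rel U \<phi> = {}"
    by blast
  ultimately have "eventually (\<lambda>g. \<phi> g ` (- N) \<inter> - N' = {}) U"
    by (intro eventually_apart_compact)
  with carrier show ?thesis
  proof eventually_elim
    case (elim g)
    have "UNIV = \<phi> g ` N \<union> \<phi> g ` (- N)"
      using phi_surj[OF elim(1)] by (metis Compl_partition image_Un)
    then have "\<phi> g ` N \<union> N' = UNIV"
      using elim(2) by blast
    then show "unlinked (ent_act \<phi> g e) e'"
      unfolding unlinked_def using small_ent_act[OF N(3), of \<phi> g] N'(3) by blast
  qed
qed

lemma finite_linking:
  assumes d3: "three_discontinuous G \<phi>" and "entourage e" "entourage e'"
  shows "finite {g \<in> carrier G. linked (ent_act \<phi> g e) e'}" (is "finite ?L")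
proof (rule ccontr)
  assume "infinite ?L"
  then have "inf cofinite (principal ?L) \<noteq> bot"
    by (simp add: trivial_limit_def eventually_inf_principal eventually_cofinite)
  then obtain U where "U \<le> inf cofinite (principal ?L)" and ultra: "ultrafilter U"
    by (rule ultrafilter_below)
  then have cofinite: "U \<le> cofinite" and in_L: "eventually (\<lambda>g. g \<in> ?L) U"
    by (simp_all add: le_principal)
  have "U \<noteq> bot"
    using ultra unfolding ultrafilter_def by simp
  have carrier: "eventually (\<lambda>g. g \<in> carrier G) U"
    using in_L by eventually_elim simp
  then have "eventually (\<lambda>g. surj (\<phi> g)) U"
    by eventually_elim (rule phi_surj)
  then have right_total: "\<exists>x. (x, y) \<in> limit_rel U \<phi>" for y
    using limit_rel_right_total[OF compact_space \<open>U \<noteq> bot\<close>] by blast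
  have left_total: "\<exists>y. (x, y) \<in> limit_rel U \<phi>" for x
    using limit_rel_left_total[OF compact_space \<open>U \<noteq> bot\<close>] by blast
  obtain b a where cover: "limit_rel U \<phi> \<subseteq> {b} \<times> UNIV \<union> UNIV \<times> {a}"
    using cover_by_row_and_column[OF left_total right_total three_points three_points
        limit_rel_no_three_matching[OF d3 ultra cofinite carrier]] .
  have "eventually (\<lambda>g. unlinked (ent_act \<phi> g e) e') U"
    using eventually_unlinked[OF assms(2,3) cover carrier] .
  with in_L have "eventually (\<lambda>g. False) U"
    by eventually_elim (simp add: linked_def)
  with \<open>U \<noteq> bot\<close> show False
    by (simp add: trivial_limit_def)
qed

subsection \<open>From a connected linking graph to a finite generating set\<close>

(* The elements linking the finitely many orbit representatives generate G: follow a path in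
   Gamma_A from a representative r0 to g.r0, translating each edge back to the representatives. *)
lemma finitely_generated_of_connected:
  assumes linking: "\<And>e e'. e \<in> A \<Longrightarrow> e' \<in> A \<Longrightarrow> finite {g \<in> carrier G. linked (ent_act \<phi> g e) e'}"
    and "A \<noteq> {}" and self: "\<And>e. e \<in> A \<Longrightarrow> self_linked e"
    and inv: "\<And>g e. g \<in> carrier G \<Longrightarrow> e \<in> A \<Longrightarrow> ent_act \<phi> g e \<in> A"
    and "finite (ent_orbit G \<phi> ` A)" and conn: "Gamma_connected A"
  shows "finitely_generated G"
proof -
  obtain R where R: "R \<subseteq> A" "finite R" "ent_orbit G \<phi> ` A = ent_orbit G \<phi> ` R"
    using finite_subset_image[OF assms(5) subset_refl] by blast
  have rep: "\<exists>r\<in>R. \<exists>h\<in>carrier G. e = ent_act \<phi> h r" if "e \<in> A" for e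
  proof -
    have "ent_orbit G \<phi> e \<in> ent_orbit G \<phi> ` R"
      using that unfolding R(3)[symmetric] by (rule imageI)
    then obtain r where "r \<in> R" "ent_orbit G \<phi> e = ent_orbit G \<phi> r"
      by blast
    then have "e \<in> ent_orbit G \<phi> r"
      using ent_orbit_self[of e] by simp
    with \<open>r \<in> R\<close> show ?thesis
      unfolding ent_orbit_def by blast
  qed
  define S where "S = (\<Union>r\<in>R. \<Union>r'\<in>R. {g \<in> carrier G. linked (ent_act \<phi> g r) r'})"
  have "finite S"
    unfolding S_def using R(1,2) linking by (intro finite_UN_I) auto
  have S: "S \<subseteq> carrier G"
    unfolding S_def by blast
  have "R \<noteq> {}"
    using assms(2) R(3) by auto
  then obtain r0 where "r0 \<in> R"
    by blast
  have reach: "h \<in> generate G S"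
    if "(r0, c) \<in> (Gamma_edges A)\<^sup>*" "h \<in> carrier G" "r \<in> R" "c = ent_act \<phi> h r" for c h r
    using that
  proof (induction arbitrary: h r rule: rtrancl_induct)
    case base
    then have "linked (ent_act \<phi> h r) r0"
      using self \<open>r0 \<in> R\<close> R(1) unfolding self_linked_def by auto
    then show ?case
      using base \<open>r0 \<in> R\<close> unfolding S_def by (blast intro: generate.incl)
  next
    case (step b c)
    then have "b \<in> A" "linked b c"
      unfolding Gamma_edges_def by auto
    then obtain r' k where k: "r' \<in> R" "k \<in> carrier G" "b = ent_act \<phi> k r'"
      using rep by blast
    have "linked (ent_act \<phi> (inv k) b) (ent_act \<phi> (inv k) c)"
      using \<open>linked b c\<close> linked_ent_act_iff k(2) by simp
    then have "linked r' (ent_act \<phi> (inv k \<otimes> h) r)"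
      using k step.prems by (simp add: ent_act_mult ent_act_one)
    then have "linked (ent_act \<phi> (inv k \<otimes> h) r) r'"
      by (rule linked_sym)
    then have "inv k \<otimes> h \<in> generate G S"
      using k step.prems unfolding S_def by (blast intro: generate.incl)
    with step.IH[OF k(2,1,3)] have "k \<otimes> (inv k \<otimes> h) \<in> generate G S"
      by (rule generate.eng)
    with k(2) step.prems(1) show ?case
      by (simp add: m_assoc[symmetric])
  qed
  have "carrier G \<subseteq> generate G S"
  proof
    fix g assume "g \<in> carrier G"
    then have "(r0, ent_act \<phi> g r0) \<in> (Gamma_edges A)\<^sup>*"
      using conn inv \<open>r0 \<in> R\<close> R(1) unfolding Gamma_connected_def by blast
    with \<open>g \<in> carrier G\<close> \<open>r0 \<in> R\<close> show "g \<in> generate G S"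
      by (intro reach) auto
  qed
  with generate_incl[OF S] \<open>finite S\<close> S show ?thesis
    unfolding finitely_generated_def by blast
qed

subsection \<open>From a finite generating set to a connected linking graph\<close>

lemma Gamma_connected_orbit:
  assumes gen: "generate G S = carrier G" "S \<subseteq> carrier G"
    and step: "\<And>s. s \<in> S \<Longrightarrow> (u, ent_act \<phi> s u) \<in> (Gamma_edges (ent_orbit G \<phi> u))\<^sup>*"
  shows "Gamma_connected (ent_orbit G \<phi> u)"
proof -
  let ?E = "(Gamma_edges (ent_orbit G \<phi> u))\<^sup>*"
  have sym: "(b, a) \<in> ?E" if "(a, b) \<in> ?E" for a b
    using sym_rtrancl[OF Gamma_edges_sym] that by (rule symD)
  have act: "(ent_act \<phi> g a, ent_act \<phi> g b) \<in> ?E" if "g \<in> carrier G" "(a, b) \<in> ?E" for g a b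
    using Gamma_edges_act[OF ent_orbit_closed that] .
  have reach: "(u, ent_act \<phi> g u) \<in> ?E" if "g \<in> generate G S" for g
    using that
  proof (induction rule: generate.induct)
    case one
    then show ?case
      by (simp add: ent_act_one)
  next
    case (incl s)
    then show ?case
      by (rule step)
  next
    case (inv s)
    then have "s \<in> carrier G"
      using gen(2) by blast
    then have "(ent_act \<phi> (inv s) u, u) \<in> ?E"
      using act[OF inv_closed[OF \<open>s \<in> carrier G\<close>] step[OF inv]] by (simp add: ent_act_inv_cancel)
    then show ?case
      by (rule sym)
  next
    case (eng g h)
    then have "g \<in> carrier G" "h \<in> carrier G"
      using gen by auto
    then have "(ent_act \<phi> g u, ent_act \<phi> (g \<otimes> h) u) \<in> ?E"
      using act[OF _ eng.IH(2)] by (simp add: ent_act_mult)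
    with eng.IH(1) show ?case
      by (rule rtrancl_trans)
  qed
  show ?thesis
    unfolding Gamma_connected_def
  proof (intro ballI)
    fix a b assume "a \<in> ent_orbit G \<phi> u" "b \<in> ent_orbit G \<phi> u"
    then obtain g h where "g \<in> carrier G" "a = ent_act \<phi> g u" "h \<in> carrier G" "b = ent_act \<phi> h u"
      unfolding ent_orbit_def by blast
    then have "(u, a) \<in> ?E" "(u, b) \<in> ?E"
      using reach unfolding gen(1) by simp_all
    then have "(a, u) \<in> ?E" "(u, b) \<in> ?E"
      using sym by auto
    then show "(a, b) \<in> ?E"
      by (rule rtrancl_trans)
  qed
qed

(* For a finite generating set S and distinct x, y, z, the orbit of the complement u of the
   off-diagonal of X = T u U_s s^-1.T (T = {x, y, z}) has all the required properties: its members
   are entourages, self-linked via the three points they avoid, and u is linked with each s.u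
   because X and s.X both contain T. *)
lemma entourage_orbit_of_finitely_generated:
  assumes "finitely_generated G"
  shows "\<exists>A. A \<noteq> {} \<and> (\<forall>e\<in>A. entourage e \<and> self_linked e)
       \<and> (\<forall>g\<in>carrier G. \<forall>e\<in>A. ent_act \<phi> g e \<in> A)
       \<and> finite (ent_orbit G \<phi> ` A)
       \<and> Gamma_connected A"
proof -
  obtain S where S: "finite S" "S \<subseteq> carrier G" "generate G S = carrier G"
    using assms unfolding finitely_generated_def by blast
  obtain x y z :: 'a where xyz: "distinct [x, y, z]"
    using three_points by blast
  define T where "T = {x, y, z}"
  define X where "X = T \<union> (\<Union>s\<in>S. \<phi> (inv s) ` T)"
  define u where "u = - off_diag X"
  define A where "A = ent_orbit G \<phi> u"
  have "finite X"
    unfolding X_def T_def using S(1) by simp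
  have "T \<subseteq> X"
    unfolding X_def by blast
  have entourages: "entourage e \<and> self_linked e" if "e \<in> A" for e
  proof -
    obtain g where g: "g \<in> carrier G" "e = - off_diag (\<phi> g ` X)"
      using \<open>e \<in> A\<close> unfolding A_def u_def ent_orbit_def by (auto simp: ent_act_Compl_off_diag)
    have dist: "distinct [\<phi> g x, \<phi> g y, \<phi> g z]"
      using xyz g(1) by (auto dest: arg_cong[where f = "\<phi> (inv g)"] simp: phi_inv_cancel)
    have sub: "{\<phi> g x, \<phi> g y, \<phi> g z} \<subseteq> \<phi> g ` X"
      using image_mono[OF \<open>T \<subseteq> X\<close>, of "\<phi> g"] unfolding T_def by simp
    have "self_linked e"
      unfolding self_linked_def g(2) by (rule linked_Compl_off_diag[OF dist sub sub])
    moreover have "entourage e"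
      unfolding g(2) using Hausdorff \<open>finite X\<close> by (simp add: entourage_Compl_off_diag)
    ultimately show ?thesis
      by simp
  qed
  have generators: "(u, ent_act \<phi> s u) \<in> (Gamma_edges A)\<^sup>*" if "s \<in> S" for s
  proof (cases "ent_act \<phi> s u = u")
    case False
    have "s \<in> carrier G"
      using S(2) that by blast
    have "T = \<phi> s ` \<phi> (inv s) ` T"
      using \<open>s \<in> carrier G\<close> by (simp add: image_image phi_cancel_inv)
    also have "\<dots> \<subseteq> \<phi> s ` X"
      unfolding X_def using that by blast
    finally have "T \<subseteq> \<phi> s ` X" .
    then have "linked u (- off_diag (\<phi> s ` X))"
      unfolding u_def using linked_Compl_off_diag[OF xyz] \<open>T \<subseteq> X\<close> unfolding T_def by blast
    then have "linked u (ent_act \<phi> s u)"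
      unfolding u_def using \<open>s \<in> carrier G\<close> by (simp add: ent_act_Compl_off_diag)
    moreover have "u \<in> A" "ent_act \<phi> s u \<in> A"
      unfolding A_def using ent_orbit_self ent_orbit_closed[OF \<open>s \<in> carrier G\<close>] by blast+
    ultimately show ?thesis
      using False unfolding Gamma_edges_def by auto
  qed simp
  have "Gamma_connected A"
    using S(3,2) generators unfolding A_def by (rule Gamma_connected_orbit)
  moreover have "finite (ent_orbit G \<phi> ` A)"
  proof (rule finite_subset)
    show "ent_orbit G \<phi> ` A \<subseteq> {A}"
      unfolding A_def using ent_orbit_eq by blast
  qed simp
  moreover have "A \<noteq> {}"
    unfolding A_def using ent_orbit_self by blast
  moreover have "\<forall>g\<in>carrier G. \<forall>e\<in>A. ent_act \<phi> g e \<in> A"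
    unfolding A_def using ent_orbit_closed by blast
  ultimately show ?thesis
    using entourages by (intro exI[of _ A]) simp
qed

lemma finitely_generated_iff_linking_graph:
  assumes "three_discontinuous G \<phi>"
  shows "finitely_generated G \<longleftrightarrow>
    (\<exists>A. A \<noteq> {} \<and> (\<forall>e\<in>A. entourage e \<and> self_linked e)
       \<and> (\<forall>g\<in>carrier G. \<forall>e\<in>A. ent_act \<phi> g e \<in> A)
       \<and> finite (ent_orbit G \<phi> ` A)
       \<and> Gamma_connected A)" (is "_ \<longleftrightarrow> (\<exists>A. ?good A)")
proof
  assume "finitely_generated G"
  then show "\<exists>A. ?good A"
    by (rule entourage_orbit_of_finitely_generated)
next
  assume "\<exists>A. ?good A"
  then obtain A where "?good A"
    by blast
  with finite_linking[OF assms] show "finitely_generated G"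
    by (intro finitely_generated_of_connected[of A]) auto
qed

end

theorem lemma3p9:
  fixes G :: "('g, 'b) monoid_scheme" (structure)
    and \<phi> :: "'g \<Rightarrow> 'a::topological_space \<Rightarrow> 'a"
  assumes "is_compactum TYPE('a)"
    and "group G"
    and "action_by_homeos G \<phi>"
    and "three_discontinuous G \<phi>"
    and "two_cocompact G \<phi>"
  shows "finitely_generated G \<longleftrightarrow>
    (\<exists>A. A \<noteq> {} \<and> (\<forall>e\<in>A. entourage e \<and> self_linked e)
       \<and> (\<forall>g\<in>carrier G. \<forall>e\<in>A. ent_act \<phi> g e \<in> A)
       \<and> finite (ent_orbit G \<phi> ` A)
       \<and> Gamma_connected A)"
proof -
  have "Hausdorff_space (euclidean :: 'a topology)"
    using assms(1) unfolding is_compactum_def Hausdorff_space_def disjnt_def by simp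
  moreover have "group_action G UNIV \<phi>"
    using assms(3) unfolding action_by_homeos_def by simp
  ultimately interpret compactum_action G \<phi>
    using assms(1,2) unfolding is_compactum_def compactum_action_def compactum_action_axioms_def
    by blast
  show ?thesis
    using assms(4) by (rule finitely_generated_iff_linking_graph)
qed

end
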